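(* Let $\varphi$ be an increasing concave function on $[0,1]$ with $\varphi(0)=0$, $\varphi(1)=1$ and $\lim_{t\to0}\varphi(t)/t=\infty$. Then there is a function $f\in\varLambda_\varphi$ with $\int_0^1f(t)\,dt\ne0$ such that $\|1-\lambda f\|_{\varLambda_\varphi}\ge1$ for every $\lambda\in\mathbb{R}$.
   Context: The Lorentz space $\varLambda_\varphi$ consists of measurable $x$ on $[0,1]$ with $\|x\|_{\varLambda_\varphi}=\int_0^1x^*(t)\,d\varphi(t)<\infty$, where $x^*$ is the decreasing right-continuous rearrangement of $|x|$; $1$ denotes the function identically equal to $1$ on $[0,1]$. *)

theory Defs
  imports "HOL-Analysis.Analysis"
begin

definition distr_fun :: "(real \<Rightarrow> real) \<Rightarrow> ennreal \<Rightarrow> ennreal" where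
  "distr_fun x s = emeasure lebesgue {u \<in> {0..1}. s < ennreal \<bar>x u\<bar>}"

text \<open>Decreasing right-continuous rearrangement x* of |x| (possibly infinite at 0).\<close>
definition decr_rearr :: "(real \<Rightarrow> real) \<Rightarrow> real \<Rightarrow> ennreal" where
  "decr_rearr x t = Inf {s. distr_fun x s \<le> ennreal t}"

text \<open>Right-continuous distribution function generating the Lebesgue--Stieltjes measure d phi
  on [0,1]; a possible jump phi(0+) at 0 is recorded as a point mass at 0.\<close>
definition phi_rc :: "(real \<Rightarrow> real) \<Rightarrow> real \<Rightarrow> real" where
  "phi_rc \<phi> t = (if t < 0 then 0 else if 1 \<le> t then \<phi> 1 else Inf (\<phi> ` {t<..1}))"

definition lorentz_norm :: "(real \<Rightarrow> real) \<Rightarrow> (real \<Rightarrow> real) \<Rightarrow> ennreal" where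
  "lorentz_norm \<phi> x =
     (\<integral>\<^sup>+ t. decr_rearr x t * indicator {0..1} t \<partial>(interval_measure (phi_rc \<phi>)))"

definition lorentz_space :: "(real \<Rightarrow> real) \<Rightarrow> (real \<Rightarrow> real) set" where
  "lorentz_space \<phi> = {x. x \<in> borel_measurable (restrict_space lebesgue {0..1})
                           \<and> lorentz_norm \<phi> x < \<infinity>}"

end

theory Submission
  imports Defs "HOL-Probability.Distribution_Functions"
begin

(* Since phi(t)/t tends to infinity, there are 0 < t0 < a < alpha < 1 with alpha <= phi(t0).
   Let beta = 1 - alpha and f = beta on [0,a), f = -alpha on [a,1]; then the integral of f is
   a - alpha, which is nonzero. The function 1 - l f takes the constant values P = |1 - l beta|
   on [0,a) and Q = |1 + l alpha| on [a,1], and P alpha + Q beta >= 1 because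
   (1 - l beta) alpha + (1 + l alpha) beta = 1. If Q <= P, the rearrangement is at least P on
   [0,t0] and the mass of d phi there is at least phi(t0) >= alpha; if P < Q, it is at least Q on
   [0,beta] and phi(beta) >= beta by concavity. Either way the Lorentz norm is at least
   P alpha + Q beta. *)

lemma mono_on_nonneg:
  fixes \<phi> :: "real \<Rightarrow> real"
  assumes "mono_on {0..1} \<phi>" "\<phi> 0 = 0" "0 \<le> s" "s \<le> 1"
  shows "0 \<le> \<phi> s"
  using assms by (metis atLeastAtMost_iff mono_onD order_refl zero_le_one)

lemma concave_on_ge_id:
  fixes \<phi> :: "real \<Rightarrow> real"
  assumes "concave_on {0..1} \<phi>" "\<phi> 0 = 0" "\<phi> 1 = 1" "0 \<le> t" "t \<le> 1"
  shows "t \<le> \<phi> t"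
proof -
  have "(1 - t) * \<phi> 0 + t * \<phi> 1 \<le> \<phi> ((1 - t) *\<^sub>R 0 + t *\<^sub>R 1)"
    by (rule concave_onD[OF assms(1)]) (use assms in auto)
  then show ?thesis using assms by simp
qed

lemma bdd_below_image_Ioc:
  fixes \<phi> :: "real \<Rightarrow> real"
  assumes "mono_on {0..1} \<phi>" "\<phi> 0 = 0" "0 \<le> t"
  shows "bdd_below (\<phi> ` {t<..1})"
  by (rule bdd_belowI[of _ 0]) (use assms mono_on_nonneg in auto)

lemma phi_rc_nonneg:
  fixes \<phi> :: "real \<Rightarrow> real"
  assumes "mono_on {0..1} \<phi>" "\<phi> 0 = 0"
  shows "0 \<le> phi_rc \<phi> t"
  unfolding phi_rc_def using mono_on_nonneg[OF assms] by (auto intro!: cInf_greatest)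

lemma phi_rc_ge:
  fixes \<phi> :: "real \<Rightarrow> real"
  assumes "mono_on {0..1} \<phi>" "\<phi> 0 = 0" "0 \<le> t" "t < 1"
  shows "\<phi> t \<le> phi_rc \<phi> t"
  unfolding phi_rc_def using assms bdd_below_image_Ioc[OF assms(1,2)]
  by (auto intro!: cInf_greatest mono_onD[OF assms(1)])

lemma phi_rc_ge_id:
  fixes \<phi> :: "real \<Rightarrow> real"
  assumes "mono_on {0..1} \<phi>" "concave_on {0..1} \<phi>" "\<phi> 0 = 0" "\<phi> 1 = 1" "0 \<le> t" "t < 1"
  shows "t \<le> phi_rc \<phi> t"
  using concave_on_ge_id[of \<phi> t] phi_rc_ge[of \<phi> t] assms by simp

lemma phi_rc_mono:
  fixes \<phi> :: "real \<Rightarrow> real"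
  assumes mono: "mono_on {0..1} \<phi>" and "\<phi> 0 = 0"
  shows "mono (phi_rc \<phi>)"
proof
  fix x y :: real assume "x \<le> y"
  consider "x < 0" | "0 \<le> x" "y < 1" | "0 \<le> x" "x < 1" "1 \<le> y" | "1 \<le> x"
    by linarith
  then show "phi_rc \<phi> x \<le> phi_rc \<phi> y"
  proof cases
    case 1
    then show ?thesis using phi_rc_nonneg[OF assms, of y] by (simp add: phi_rc_def)
  next
    case 2
    then show ?thesis unfolding phi_rc_def using \<open>x \<le> y\<close> assms
      by (auto intro!: cInf_superset_mono bdd_below_image_Ioc)
  next
    case 3
    then show ?thesis unfolding phi_rc_def using assms
      by (auto intro!: cInf_lower bdd_below_image_Ioc)
  qed (use \<open>x \<le> y\<close> in \<open>auto simp: phi_rc_def\<close>)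
qed

lemma phi_rc_continuous_at_right:
  fixes \<phi> :: "real \<Rightarrow> real"
  assumes "mono_on {0..1} \<phi>" "\<phi> 0 = 0"
  shows "continuous (at_right a) (phi_rc \<phi>)"
  unfolding continuous_within
proof (rule order_tendstoI)
  fix y assume "y < phi_rc \<phi> a"
  then show "\<forall>\<^sub>F x in at_right a. y < phi_rc \<phi> x"
    unfolding eventually_at_right_field by (intro exI[of _ "a + 1"]) (auto intro: less_le_trans[OF _ monoD[OF phi_rc_mono[OF assms]]])
next
  fix y assume y: "phi_rc \<phi> a < y"
  consider "a < 0" | "1 \<le> a" | "0 \<le> a" "a < 1" by linarith
  then show "\<forall>\<^sub>F x in at_right a. phi_rc \<phi> x < y"
  proof cases
    case 3
    then have "Inf (\<phi> ` {a<..1}) < y" using y by (simp add: phi_rc_def)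
    then obtain z where z: "z \<in> {a<..1}" "\<phi> z < y"
      using 3 assms by (subst (asm) cInf_less_iff) (auto intro: bdd_below_image_Ioc)
    have "phi_rc \<phi> x \<le> \<phi> z" if "a < x" "x < z" for x
      using that z 3 assms by (auto simp: phi_rc_def intro!: cInf_lower bdd_below_image_Ioc)
    then show ?thesis
      unfolding eventually_at_right_field using z by (intro exI[of _ z]) force
  qed (use y in \<open>auto simp: eventually_at_right_field phi_rc_def intro: exI[of _ "a + 1"]\<close>)
qed

lemma emeasure_phi_rc_Icc:
  fixes \<phi> :: "real \<Rightarrow> real"
  assumes "mono_on {0..1} \<phi>" "\<phi> 0 = 0" "0 \<le> b"
  shows "emeasure (interval_measure (phi_rc \<phi>)) {0..b} = phi_rc \<phi> b"
proof -
  let ?M = "interval_measure (phi_rc \<phi>)"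
  have "(phi_rc \<phi> \<longlongrightarrow> 0) at_bot"
    by (rule tendsto_eventually)
       (auto simp: eventually_at_bot_linorder phi_rc_def intro!: exI[of _ "-1"])
  then have Iic: "emeasure ?M {..x} = phi_rc \<phi> x" for x
    using emeasure_interval_measure_Iic phi_rc_mono phi_rc_continuous_at_right assms
    by (metis monoD)
  have "{..<0::real} = (\<Union>n::nat. {.. -1 / Suc n})"
  proof (intro set_eqI iffI)
    fix x :: real assume "x \<in> {..<0}"
    then obtain n :: nat where "1 / Suc n < -x"
      by (metis lessThan_iff neg_0_less_iff_less nat_approx_posE)
    then show "x \<in> (\<Union>n::nat. {.. -1 / Suc n})" by (auto intro!: exI[of _ n])
  next
    fix x :: real assume "x \<in> (\<Union>n::nat. {.. -1 / Suc n})"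
    then obtain n :: nat where "x \<le> -1 / Suc n" by auto
    moreover have "-1 / Suc n < (0::real)" by simp
    ultimately show "x \<in> {..<0}" unfolding lessThan_iff by linarith
  qed
  moreover have "{.. -1 / Suc n} \<in> null_sets ?M" for n :: nat
    by (rule null_setsI) (auto simp: Iic phi_rc_def)
  ultimately have "{..<0::real} \<in> null_sets ?M" by auto
  moreover have "{0..b} = {..b} - {..<0}" by auto
  ultimately show ?thesis by (simp add: emeasure_Diff_null_set Iic)
qed

lemma decr_rearr_ge:
  fixes x :: "real \<Rightarrow> real"
  assumes "x \<in> borel_measurable lebesgue" "S \<in> sets lebesgue" "S \<subseteq> {0..1}"
    and "ennreal t < emeasure lebesgue S" and "\<forall>u\<in>S. R \<le> \<bar>x u\<bar>"
  shows "ennreal R \<le> decr_rearr x t"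
  unfolding decr_rearr_def
proof (rule Inf_greatest, clarify, rule ccontr)
  fix s assume s: "distr_fun x s \<le> ennreal t" "\<not> ennreal R \<le> s"
  then have "s < ennreal R" by simp
  have "(\<lambda>u. ennreal \<bar>x u\<bar>) \<in> borel_measurable lebesgue" using assms(1) by measurable
  then have "{u \<in> space lebesgue. s < ennreal \<bar>x u\<bar>} \<in> sets lebesgue" by measurable
  then have "{0..1} \<inter> {u \<in> space lebesgue. s < ennreal \<bar>x u\<bar>} \<in> sets lebesgue" by auto
  moreover have "{0..1} \<inter> {u \<in> space lebesgue. s < ennreal \<bar>x u\<bar>} =
      {u \<in> {0..1}. s < ennreal \<bar>x u\<bar>}" by auto
  moreover have "S \<subseteq> {u \<in> {0..1}. s < ennreal \<bar>x u\<bar>}"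
    using assms(3,5) \<open>s < ennreal R\<close> by (auto intro: less_le_trans ennreal_leI)
  ultimately have "emeasure lebesgue S \<le> distr_fun x s"
    unfolding distr_fun_def by (metis emeasure_mono)
  with s(1) assms(4) show False by simp
qed

lemma decr_rearr_le:
  fixes x :: "real \<Rightarrow> real"
  assumes "\<forall>u\<in>{0..1}. \<bar>x u\<bar> \<le> B"
  shows "decr_rearr x t \<le> ennreal B"
proof -
  have "0 \<le> B" using assms by force
  then have "{u \<in> {0..1}. ennreal B < ennreal \<bar>x u\<bar>} = {}"
    using assms by (fastforce simp: ennreal_less_iff)
  then have "distr_fun x (ennreal B) \<le> ennreal t"
    by (simp only: distr_fun_def emeasure_empty zero_le)
  then show ?thesis unfolding decr_rearr_def by (auto intro: Inf_lower)
qed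

lemma lorentz_norm_lt_top:
  fixes \<phi> x :: "real \<Rightarrow> real"
  assumes "mono_on {0..1} \<phi>" "\<phi> 0 = 0" and "\<forall>u\<in>{0..1}. \<bar>x u\<bar> \<le> B"
  shows "lorentz_norm \<phi> x < \<infinity>"
proof -
  let ?M = "interval_measure (phi_rc \<phi>)"
  have "lorentz_norm \<phi> x \<le> (\<integral>\<^sup>+t. ennreal B * indicator {0..1} t \<partial>?M)"
    unfolding lorentz_norm_def
    by (rule nn_integral_mono) (auto simp: indicator_def decr_rearr_le[OF assms(3)])
  also have "\<dots> = ennreal B * ennreal (phi_rc \<phi> 1)"
    by (simp add: nn_integral_cmult_indicator emeasure_phi_rc_Icc[OF assms(1,2)])
  also have "\<dots> < \<infinity>" by (simp flip: ennreal_mult add: ennreal_mult_less_top)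
  finally show ?thesis .
qed

text \<open>The rearrangement of every function vanishes at \<open>1\<close>, hence the bound \<open>c < 1\<close>.\<close>

lemma lorentz_norm_ge_two_levels:
  fixes \<phi> x :: "real \<Rightarrow> real"
  assumes mono: "mono_on {0..1} \<phi>" and p0: "\<phi> 0 = 0"
    and x: "x \<in> borel_measurable lebesgue" and S: "S \<in> sets lebesgue" "S \<subseteq> {0..1}"
    and s: "ennreal s < emeasure lebesgue S" "0 \<le> s" "s \<le> c" "c < 1"
    and hi: "\<forall>u\<in>S. hi \<le> \<bar>x u\<bar>" and lo: "\<forall>u\<in>{0..1}. lo \<le> \<bar>x u\<bar>"
    and "0 \<le> hi" "0 \<le> lo"
  shows "ennreal (hi * phi_rc \<phi> s + lo * (phi_rc \<phi> c - phi_rc \<phi> s)) \<le> lorentz_norm \<phi> x"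
proof -
  let ?F = "phi_rc \<phi>" let ?M = "interval_measure ?F"
  have "?F s \<le> ?F c" using phi_rc_mono[OF mono p0] s by (simp add: monoD)
  then have "ennreal (hi * ?F s + lo * (?F c - ?F s))
      = ennreal hi * ennreal (?F s) + ennreal lo * ennreal (?F c - ?F s)"
    using phi_rc_nonneg[OF mono p0] assms by (simp add: ennreal_plus ennreal_mult)
  also have "\<dots> = ennreal hi * emeasure ?M {0..s} + ennreal lo * emeasure ?M {s<..c}"
    using emeasure_phi_rc_Icc[OF mono p0 s(2)] phi_rc_mono[OF mono p0]
      phi_rc_continuous_at_right[OF mono p0] s(3)
    by (simp add: emeasure_interval_measure_Ioc monoD)
  also have "\<dots> = (\<integral>\<^sup>+t. ennreal hi * indicator {0..s} t + ennreal lo * indicator {s<..c} t \<partial>?M)"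
    by (simp add: nn_integral_add nn_integral_cmult_indicator)
  also have "\<dots> \<le> lorentz_norm \<phi> x"
    unfolding lorentz_norm_def
  proof (rule nn_integral_mono)
    fix t :: real
    have "ennreal hi \<le> decr_rearr x t" if "t \<in> {0..s}"
      using s(1) that by (intro decr_rearr_ge[OF x S _ hi]) (auto intro: le_less_trans[OF ennreal_leI])
    moreover have "ennreal lo \<le> decr_rearr x t" if "t \<in> {s<..c}"
      using s that by (intro decr_rearr_ge[OF x _ _ _ lo]) (auto simp: ennreal_less_iff)
    ultimately show "ennreal hi * indicator {0..s} t + ennreal lo * indicator {s<..c} t
        \<le> decr_rearr x t * indicator {0..1} t"
      using s by (auto simp: indicator_def)
  qed
  finally show ?thesis .
qed

lemma lorentz_norm_ge_weighted_levels:
  fixes \<phi> x :: "real \<Rightarrow> real"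
  assumes mono: "mono_on {0..1} \<phi>" and conc: "concave_on {0..1} \<phi>"
    and p0: "\<phi> 0 = 0" and p1: "\<phi> 1 = 1"
    and x: "x \<in> borel_measurable lebesgue" and S: "S \<in> sets lebesgue" "S \<subseteq> {0..1}"
    and s: "ennreal s < emeasure lebesgue S" "0 \<le> s" "s \<le> c" "c < 1"
    and hi: "\<forall>u\<in>S. hi \<le> \<bar>x u\<bar>" and lo: "\<forall>u\<in>{0..1}. lo \<le> \<bar>x u\<bar>"
    and "0 \<le> lo" "lo \<le> hi" "w \<le> phi_rc \<phi> s"
  shows "ennreal (hi * w + lo * (1 - w) - lo * (1 - c)) \<le> lorentz_norm \<phi> x"
proof -
  have "0 \<le> (hi - lo) * (phi_rc \<phi> s - w)" "0 \<le> lo * (phi_rc \<phi> c - c)"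
    using assms phi_rc_ge_id[OF mono conc p0 p1, of c] by auto
  then have "hi * w + lo * (1 - w) - lo * (1 - c)
      \<le> hi * phi_rc \<phi> s + lo * (phi_rc \<phi> c - phi_rc \<phi> s)"
    by (simp add: algebra_simps)
  then show ?thesis
    using lorentz_norm_ge_two_levels[OF mono p0 x S s hi lo] assms
    by (meson ennreal_leI order_trans)
qed

lemma set_integral_step:
  fixes a b :: real
  assumes "0 \<le> a" "a \<le> 1"
  shows "(LINT t:{0..1}|lebesgue. b - indicator {a..} t) = b - (1 - a)"
proof -
  have "(\<lambda>t. indicator {0..1} t *\<^sub>R (b - indicator {a..} t))
      = (\<lambda>t. b * indicator {0..1} t - indicator {a..1} t :: real)"
    using assms by (auto simp: indicator_def fun_eq_iff)
  moreover have "integrable lebesgue (\<lambda>t. indicator {c..1::real} t :: real)" for c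
    by (intro integrable_real_indicator) (auto simp: emeasure_lborel_Icc_eq)
  ultimately show ?thesis
    using assms unfolding set_lebesgue_integral_def
    by (simp add: measure_def emeasure_lborel_Icc_eq)
qed

lemma exists_step_parameters:
  fixes \<phi> :: "real \<Rightarrow> real"
  assumes "filterlim (\<lambda>t. \<phi> t / t) at_top (at_right 0)"
  obtains t0 a \<alpha> :: real where "0 < t0" "t0 < a" "a < \<alpha>" "\<alpha> < 1" "\<alpha> \<le> \<phi> t0"
proof -
  have "\<forall>\<^sub>F t in at_right 0. 3 \<le> \<phi> t / t"
    using assms by (simp add: filterlim_at_top)
  then obtain b where "0 < b" and b: "\<And>t. 0 < t \<Longrightarrow> t < b \<Longrightarrow> 3 \<le> \<phi> t / t"
    unfolding eventually_at_right_field by auto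
  define t0 where "t0 = min (b / 2) (1 / 4)"
  have t0: "0 < t0" "t0 \<le> 1 / 4" using \<open>0 < b\<close> by (auto simp: t0_def)
  have "3 \<le> \<phi> t0 / t0" using b t0 \<open>0 < b\<close> by (simp add: t0_def)
  then have "3 * t0 \<le> \<phi> t0" using t0 by (simp add: field_simps)
  then show ?thesis
    using t0 by (intro that[of t0 "2 * t0" "min (\<phi> t0) (1 / 2 + t0)"]) auto
qed

lemma lorentz_norm_two_valued_ge:
  fixes \<phi> x :: "real \<Rightarrow> real"
  assumes mono: "mono_on {0..1} \<phi>" and conc: "concave_on {0..1} \<phi>"
    and p0: "\<phi> 0 = 0" and p1: "\<phi> 1 = 1" and x: "x \<in> borel_measurable lebesgue"
    and par: "0 < t0" "t0 < a" "a < \<alpha>" "\<alpha> < 1" "\<alpha> \<le> \<phi> t0"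
    and xA: "\<forall>u\<in>{0..<a}. \<bar>x u\<bar> = P" and xB: "\<forall>u\<in>{a..1}. \<bar>x u\<bar> = Q"
    and c: "max \<alpha> (1 - \<alpha>) \<le> c" "c < 1"
  shows "ennreal (P * \<alpha> + Q * (1 - \<alpha>) - (P + Q) * (1 - c)) \<le> lorentz_norm \<phi> x"
proof -
  have "0 \<le> P" "0 \<le> Q" using xA xB par by force+
  then have "0 \<le> P * (1 - c)" "0 \<le> Q * (1 - c)" using c by simp_all
  show ?thesis
  proof (cases "Q \<le> P")
    case True
    have "\<forall>u\<in>{0..1}. Q \<le> \<bar>x u\<bar>" using xA xB True by fastforce
    moreover have "\<alpha> \<le> phi_rc \<phi> t0" using phi_rc_ge[OF mono p0, of t0] par by simp
    ultimately have "ennreal (P * \<alpha> + Q * (1 - \<alpha>) - Q * (1 - c)) \<le> lorentz_norm \<phi> x"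
      using par c xA True \<open>0 \<le> Q\<close>
      by (intro lorentz_norm_ge_weighted_levels[OF mono conc p0 p1 x, of "{0..<a}" t0])
         (auto simp: ennreal_less_iff)
    moreover have "P * \<alpha> + Q * (1 - \<alpha>) - (P + Q) * (1 - c) \<le> P * \<alpha> + Q * (1 - \<alpha>) - Q * (1 - c)"
      using \<open>0 \<le> P * (1 - c)\<close> by (simp add: algebra_simps)
    ultimately show ?thesis by (meson ennreal_leI order_trans)
  next
    case False
    have "\<forall>u\<in>{0..1}. P \<le> \<bar>x u\<bar>" using xA xB False by fastforce
    moreover have "1 - \<alpha> \<le> phi_rc \<phi> (1 - \<alpha>)" using phi_rc_ge_id[OF mono conc p0 p1] par by simp
    ultimately have "ennreal (Q * (1 - \<alpha>) + P * (1 - (1 - \<alpha>)) - P * (1 - c)) \<le> lorentz_norm \<phi> x"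
      using par c xB False \<open>0 \<le> P\<close>
      by (intro lorentz_norm_ge_weighted_levels[OF mono conc p0 p1 x, of "{a..1}" "1 - \<alpha>"])
         (auto simp: ennreal_less_iff)
    moreover have "P * \<alpha> + Q * (1 - \<alpha>) - (P + Q) * (1 - c) \<le> Q * (1 - \<alpha>) + P * (1 - (1 - \<alpha>)) - P * (1 - c)"
      using \<open>0 \<le> Q * (1 - c)\<close> by (simp add: algebra_simps)
    ultimately show ?thesis by (meson ennreal_leI order_trans)
  qed
qed

lemma lorentz_norm_step_ge_one:
  fixes \<phi> :: "real \<Rightarrow> real"
  assumes mono: "mono_on {0..1} \<phi>" and conc: "concave_on {0..1} \<phi>"
    and p0: "\<phi> 0 = 0" and p1: "\<phi> 1 = 1"
    and par: "0 < t0" "t0 < a" "a < \<alpha>" "\<alpha> < 1" "\<alpha> \<le> \<phi> t0"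
  shows "1 \<le> lorentz_norm \<phi> (\<lambda>t. 1 - l * (1 - \<alpha> - indicator {a..} t))"
    (is "_ \<le> lorentz_norm \<phi> ?x")
proof -
  define P where "P = \<bar>1 - l * (1 - \<alpha>)\<bar>"
  define Q where "Q = \<bar>1 + l * \<alpha>\<bar>"
  have "indicator {a..} \<in> borel_measurable lebesgue" by (rule borel_measurable_indicator) simp
  then have x: "?x \<in> borel_measurable lebesgue" by measurable
  have xA: "\<forall>u\<in>{0..<a}. \<bar>?x u\<bar> = P" by (simp add: P_def)
  have xB: "\<forall>u\<in>{a..1}. \<bar>?x u\<bar> = Q" by (simp add: Q_def algebra_simps)
  have "(1 - l * (1 - \<alpha>)) * \<alpha> + (1 + l * \<alpha>) * (1 - \<alpha>) = 1" by (simp add: algebra_simps)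
  moreover have "(1 - l * (1 - \<alpha>)) * \<alpha> \<le> P * \<alpha>" "(1 + l * \<alpha>) * (1 - \<alpha>) \<le> Q * (1 - \<alpha>)"
    using par by (auto simp: P_def Q_def intro!: mult_right_mono)
  ultimately have PQ: "1 \<le> P * \<alpha> + Q * (1 - \<alpha>)" by linarith
  let ?bound = "\<lambda>c. ennreal (P * \<alpha> + Q * (1 - \<alpha>) - (P + Q) * (1 - c))"
  have "(?bound \<longlongrightarrow> ennreal (P * \<alpha> + Q * (1 - \<alpha>) - (P + Q) * (1 - 1))) (at_left 1)"
    by (intro tendsto_intros)
  moreover have "\<forall>\<^sub>F c in at_left 1. ?bound c \<le> lorentz_norm \<phi> ?x"
    using par unfolding eventually_at_left_field
    by (intro exI[of _ "max \<alpha> (1 - \<alpha>)"])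
       (auto intro!: lorentz_norm_two_valued_ge[OF mono conc p0 p1 x par xA xB])
  ultimately have "ennreal (P * \<alpha> + Q * (1 - \<alpha>)) \<le> lorentz_norm \<phi> ?x"
    by (intro tendsto_le[OF trivial_limit_at_left_real tendsto_const]) auto
  then show ?thesis using PQ by (metis ennreal_1 ennreal_leI order_trans)
qed

theorem corollary5:
  fixes \<phi> :: "real \<Rightarrow> real"
  assumes "mono_on {0..1} \<phi>"
    and "concave_on {0..1} \<phi>"
    and "\<phi> 0 = 0" and "\<phi> 1 = 1"
    and "filterlim (\<lambda>t. \<phi> t / t) at_top (at_right 0)"
  shows "\<exists>f \<in> lorentz_space \<phi>.
           (LINT t:{0..1}|lebesgue. f t) \<noteq> 0 \<and>
           (\<forall>l::real. lorentz_norm \<phi> (\<lambda>t. 1 - l * f t) \<ge> 1)"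
proof -
  obtain t0 a \<alpha> where par: "0 < t0" "t0 < a" "a < \<alpha>" "\<alpha> < 1" "\<alpha> \<le> \<phi> t0"
    using exists_step_parameters[OF assms(5)] by blast
  define f where "f t = 1 - \<alpha> - indicator {a..} t" for t
  have "indicator {a..} \<in> borel_measurable lebesgue" by (rule borel_measurable_indicator) simp
  then have "f \<in> borel_measurable lebesgue" unfolding f_def by measurable
  moreover have "\<forall>u\<in>{0..1}. \<bar>f u\<bar> \<le> 1" using par by (auto simp: f_def indicator_def)
  ultimately have "f \<in> lorentz_space \<phi>"
    using lorentz_norm_lt_top[OF assms(1,3)] measurable_restrict_space1
    unfolding lorentz_space_def by blast
  moreover have "(LINT t:{0..1}|lebesgue. f t) = a - \<alpha>"
    using set_integral_step[of a "1 - \<alpha>"] par unfolding f_def by simp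
  moreover have "\<forall>l. 1 \<le> lorentz_norm \<phi> (\<lambda>t. 1 - l * f t)"
    using lorentz_norm_step_ge_one[OF assms(1-4) par] unfolding f_def by blast
  ultimately show ?thesis using par by (intro bexI[of _ f]) auto
qed

end
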